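(* Let $k$ be an algebraically closed field of characteristic $0$ and let $X$ be an affine $k$-variety. Then $\mathcal{O}_{ch}(X)\subseteq ML(X)$. In particular, if $ML(X)=k$ then $\mathcal{O}_{ch}(X)=k$.
   Context: For a $k$-morphism $g:\mathbb{A}^1_k\to X$, $\mathcal{O}_{ch,g}(X)=\{f\in\mathcal{O}(X): f\circ g\text{ is constant}\}$, and $\mathcal{O}_{ch}(X)=\bigcap_{g}\mathcal{O}_{ch,g}(X)$ over all $k$-morphisms $g:\mathbb{A}^1_k\to X$. A locally nilpotent $k$-derivation of $\mathcal{O}(X)$ is a $k$-linear derivation $D$ such that every element is killed by some power of $D$; $LND_k(\mathcal{O}(X))$ denotes the set of these. The Makar-Limanov invariant is $ML(X)=\bigcap_{D\in LND_k(\mathcal{O}(X))}\ker D$. *)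

theory Defs
  imports "HOL-Computational_Algebra.Polynomial"
begin

text \<open>An affine k-variety X is represented by its coordinate ring O(X): a reduced,
finitely generated commutative k-algebra, given as a type 'b with structure map
iota : k \<rightarrow> O(X).\<close>

definition alg_closed :: "'a::field itself \<Rightarrow> bool" where
  "alg_closed _ \<longleftrightarrow> (\<forall>p::'a poly. degree p \<ge> 1 \<longrightarrow> (\<exists>x. poly p x = 0))"

definition k_algebra_map :: "('a::field \<Rightarrow> 'b::comm_ring_1) \<Rightarrow> bool" where
  "k_algebra_map iota \<longleftrightarrow> iota 1 = 1 \<and> (\<forall>a b. iota (a + b) = iota a + iota b)
     \<and> (\<forall>a b. iota (a * b) = iota a * iota b)"

inductive_set subalg_gen :: "('a::field \<Rightarrow> 'b::comm_ring_1) \<Rightarrow> 'b set \<Rightarrow> 'b set"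
  for iota S where
  scalar: "iota c \<in> subalg_gen iota S"
| gen: "x \<in> S \<Longrightarrow> x \<in> subalg_gen iota S"
| add: "x \<in> subalg_gen iota S \<Longrightarrow> y \<in> subalg_gen iota S \<Longrightarrow> x + y \<in> subalg_gen iota S"
| mult: "x \<in> subalg_gen iota S \<Longrightarrow> y \<in> subalg_gen iota S \<Longrightarrow> x * y \<in> subalg_gen iota S"

definition finitely_generated :: "('a::field \<Rightarrow> 'b::comm_ring_1) \<Rightarrow> bool" where
  "finitely_generated iota \<longleftrightarrow> (\<exists>S. finite S \<and> subalg_gen iota S = UNIV)"

definition reduced :: "'b::comm_ring_1 itself \<Rightarrow> bool" where
  "reduced _ \<longleftrightarrow> (\<forall>(x::'b) n. x ^ n = 0 \<longrightarrow> x = 0)"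

text \<open>k-morphisms g : A^1_k \<rightarrow> X correspond to k-algebra homomorphisms
g^* : O(X) \<rightarrow> k[t]; f \<circ> g corresponds to g^* f.\<close>
definition A1_morphism :: "('a::field \<Rightarrow> 'b::comm_ring_1) \<Rightarrow> ('b \<Rightarrow> 'a poly) \<Rightarrow> bool" where
  "A1_morphism iota \<phi> \<longleftrightarrow> \<phi> 1 = 1 \<and> (\<forall>x y. \<phi> (x + y) = \<phi> x + \<phi> y)
     \<and> (\<forall>x y. \<phi> (x * y) = \<phi> x * \<phi> y) \<and> (\<forall>c. \<phi> (iota c) = [:c:])"

definition O_ch_g :: "('a::field \<Rightarrow> 'b::comm_ring_1) \<Rightarrow> ('b \<Rightarrow> 'a poly) \<Rightarrow> 'b set" where
  "O_ch_g iota \<phi> = {f. \<exists>c. \<phi> f = [:c:]}"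

definition O_ch :: "('a::field \<Rightarrow> 'b::comm_ring_1) \<Rightarrow> 'b set" where
  "O_ch iota = (\<Inter>\<phi>\<in>{\<phi>. A1_morphism iota \<phi>}. O_ch_g iota \<phi>)"

definition k_derivation :: "('a::field \<Rightarrow> 'b::comm_ring_1) \<Rightarrow> ('b \<Rightarrow> 'b) \<Rightarrow> bool" where
  "k_derivation iota D \<longleftrightarrow> (\<forall>x y. D (x + y) = D x + D y)
     \<and> (\<forall>c x. D (iota c * x) = iota c * D x)
     \<and> (\<forall>x y. D (x * y) = x * D y + y * D x)"

definition LND :: "('a::field \<Rightarrow> 'b::comm_ring_1) \<Rightarrow> ('b \<Rightarrow> 'b) set" where
  "LND iota = {D. k_derivation iota D \<and> (\<forall>x. \<exists>n. (D ^^ n) x = 0)}"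

definition makar_limanov :: "('a::field \<Rightarrow> 'b::comm_ring_1) \<Rightarrow> 'b set" where
  "makar_limanov iota = (\<Inter>D\<in>LND iota. {x. D x = 0})"

end

theory Submission
  imports Defs
begin

text \<open>Let \<open>f \<in> \<O>\<^sub>c\<^sub>h(X)\<close> and let \<open>D\<close> be locally nilpotent with \<open>D f \<noteq> 0\<close>. Since \<open>X\<close> is
  reduced, \<open>D f\<close> is not nilpotent, so by the weak Nullstellensatz it does not vanish at some
  \<open>k\<close>-point \<open>p\<close> of \<open>X\<close>. The orbit map \<open>t \<mapsto> exp(tD) \<cdot> p\<close> is a morphism \<open>\<bbbA>\<^sup>1 \<rightarrow> X\<close>, along
  which \<open>f\<close> pulls back to \<open>\<Sum>\<^sub>n (D\<^sup>n f)(p) t\<^sup>n / n!\<close>; its linear coefficient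
  \<open>(D f)(p)\<close> is non-zero, contradicting \<open>f \<in> \<O>\<^sub>c\<^sub>h(X)\<close>.

  The weak Nullstellensatz is proved by choosing a prime ideal \<open>P\<close> avoiding the powers of the
  given element and lifting \<open>k\<close>-points of \<open>A/P\<close> along the generators, \<open>A \<subseteq> A[x]\<close>, as in
  Lang's proof: if \<open>x\<close> is transcendental modulo \<open>P\<close> it may be sent to any non-root of a
  polynomial, and if it is algebraic to a root of its minimal relation.\<close>

section \<open>Ideals\<close>

definition ideal :: "'a::comm_ring_1 set \<Rightarrow> bool" where
  "ideal I \<longleftrightarrow> 0 \<in> I \<and> (\<forall>a\<in>I. \<forall>b\<in>I. a + b \<in> I) \<and> (\<forall>a\<in>I. \<forall>r. r * a \<in> I)"

definition prime_ideal :: "'a::comm_ring_1 set \<Rightarrow> bool" where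
  "prime_ideal P \<longleftrightarrow> ideal P \<and> 1 \<notin> P \<and> (\<forall>a b. a * b \<in> P \<longrightarrow> a \<in> P \<or> b \<in> P)"

lemma ideal_zero: "ideal I \<Longrightarrow> 0 \<in> I"
  by (simp add: ideal_def)

lemma ideal_add: "ideal I \<Longrightarrow> a \<in> I \<Longrightarrow> b \<in> I \<Longrightarrow> a + b \<in> I"
  by (simp add: ideal_def)

lemma ideal_mult_left: "ideal I \<Longrightarrow> a \<in> I \<Longrightarrow> r * a \<in> I"
  by (simp add: ideal_def)

lemma ideal_mult_right: "ideal I \<Longrightarrow> a \<in> I \<Longrightarrow> a * r \<in> I"
  by (metis ideal_mult_left mult.commute)

lemma ideal_diff: "ideal I \<Longrightarrow> a \<in> I \<Longrightarrow> b \<in> I \<Longrightarrow> a - b \<in> I"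
  using ideal_add[of I a "(-1) * b"] ideal_mult_left[of I b "-1"] by simp

lemma ideal_diff_mem_iff: "ideal I \<Longrightarrow> a - b \<in> I \<Longrightarrow> a \<in> I \<longleftrightarrow> b \<in> I"
  using ideal_diff[of I a "a - b"] ideal_add[of I "a - b" b] by auto

lemma ideal_sum: "ideal I \<Longrightarrow> (\<And>i. i \<in> S \<Longrightarrow> f i \<in> I) \<Longrightarrow> sum f S \<in> I"
  by (induction S rule: infinite_finite_induct) (auto intro: ideal_zero ideal_add)

lemma poly_mem_ideal: "ideal I \<Longrightarrow> \<forall>i. coeff p i \<in> I \<Longrightarrow> poly p x \<in> I"
  by (induction p) (auto simp: coeff_pCons split: nat.splits intro: ideal_add ideal_mult_left)

lemma prime_ideal_ideal: "prime_ideal P \<Longrightarrow> ideal P"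
  by (simp add: prime_ideal_def)

lemma prime_ideal_mult_notin: "prime_ideal P \<Longrightarrow> a \<notin> P \<Longrightarrow> b \<notin> P \<Longrightarrow> a * b \<notin> P"
  by (auto simp: prime_ideal_def)

lemma prime_ideal_power_notin: "prime_ideal P \<Longrightarrow> a \<notin> P \<Longrightarrow> a ^ n \<notin> P"
  by (induction n) (auto simp: prime_ideal_def)

lemma ideal_Union_chain:
  assumes "C \<noteq> {}" "\<And>I J. I \<in> C \<Longrightarrow> J \<in> C \<Longrightarrow> I \<subseteq> J \<or> J \<subseteq> I" "\<And>I. I \<in> C \<Longrightarrow> ideal I"
  shows "ideal (\<Union>C)"
  unfolding ideal_def
proof (intro conjI ballI allI)
  show "0 \<in> \<Union>C"
    using assms(1,3) ideal_zero by blast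
next
  fix a b assume "a \<in> \<Union>C" "b \<in> \<Union>C"
  then obtain I J where "I \<in> C" "J \<in> C" "a \<in> I" "b \<in> J" by blast
  with assms(2,3) show "a + b \<in> \<Union>C"
    by (metis UnionI ideal_add subsetD)
next
  fix a r assume "a \<in> \<Union>C"
  with assms(3) show "r * a \<in> \<Union>C"
    using ideal_mult_left by blast
qed

lemma ideal_extend: "ideal I \<Longrightarrow> ideal {m + r * a |m r. m \<in> I}"
  unfolding ideal_def
proof (intro conjI ballI allI)
  assume I: "0 \<in> I \<and> (\<forall>a\<in>I. \<forall>b\<in>I. a + b \<in> I) \<and> (\<forall>a\<in>I. \<forall>r. r * a \<in> I)"
  then show "0 \<in> {m + r * a |m r. m \<in> I}"
    by (metis (mono_tags, lifting) add_0 mem_Collect_eq mult_zero_left)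
  fix y z assume "y \<in> {m + r * a |m r. m \<in> I}" "z \<in> {m + r * a |m r. m \<in> I}"
  then obtain m r m' r' where "y = m + r * a" "z = m' + r' * a" "m \<in> I" "m' \<in> I" by blast
  with I show "y + z \<in> {m + r * a |m r. m \<in> I}"
    by (intro CollectI exI[of _ "m + m'"] exI[of _ "r + r'"]) (simp add: algebra_simps)
next
  fix y s assume I: "0 \<in> I \<and> (\<forall>a\<in>I. \<forall>b\<in>I. a + b \<in> I) \<and> (\<forall>a\<in>I. \<forall>r. r * a \<in> I)"
    and "y \<in> {m + r * a |m r. m \<in> I}"
  then obtain m r where "y = m + r * a" "m \<in> I" by blast
  with I show "s * y \<in> {m + r * a |m r. m \<in> I}"
    by (intro CollectI exI[of _ "s * m"] exI[of _ "s * r"]) (simp add: algebra_simps)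
qed

lemma exists_maximal_ideal_avoiding_powers:
  fixes h :: "'a::comm_ring_1"
  assumes not_nilpotent: "\<forall>n. h ^ n \<noteq> 0"
  obtains M where "ideal M" "\<forall>n. h ^ n \<notin> M"
    "\<And>I. ideal I \<Longrightarrow> \<forall>n. h ^ n \<notin> I \<Longrightarrow> M \<subseteq> I \<Longrightarrow> I = M"
proof -
  define S where "S = {I. ideal I \<and> (\<forall>n. h ^ n \<notin> I)}"
  have "\<exists>M\<in>S. \<forall>I\<in>S. M \<subseteq> I \<longrightarrow> I = M"
  proof (rule Zorn_Lemma2, intro ballI)
    fix C assume C: "C \<in> chains S"
    show "\<exists>U\<in>S. \<forall>I\<in>C. I \<subseteq> U"
    proof (cases "C = {}")
      case True
      have "{0} \<in> S"
        using not_nilpotent by (simp add: S_def ideal_def)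
      with True show ?thesis by blast
    next
      case False
      have "\<Union>C \<in> S"
        using chainsD2[OF C] chainsD[OF C] False unfolding S_def
        by (auto intro!: ideal_Union_chain)
      then show ?thesis by blast
    qed
  qed
  then obtain M where M: "M \<in> S" and M_max: "\<forall>I\<in>S. M \<subseteq> I \<longrightarrow> I = M"
    by blast
  show thesis
  proof (rule that)
    show "ideal M" "\<forall>n. h ^ n \<notin> M"
      using M by (simp_all add: S_def)
    show "I = M" if "ideal I" "\<forall>n. h ^ n \<notin> I" "M \<subseteq> I" for I
      using M_max that by (simp add: S_def)
  qed
qed

text \<open>Krull: enlarging \<open>M\<close> by \<open>a \<notin> M\<close> or by \<open>b \<notin> M\<close> produces powers of \<open>h\<close>, whose product
  lies in \<open>M\<close> when \<open>a * b\<close> does.\<close>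

lemma prime_ideal_if_maximal_avoiding_powers:
  assumes M: "ideal M" "\<forall>n. h ^ n \<notin> M"
    and M_max: "\<And>I. ideal I \<Longrightarrow> \<forall>n. h ^ n \<notin> I \<Longrightarrow> M \<subseteq> I \<Longrightarrow> I = M"
  shows "prime_ideal M"
proof -
  have power_in_extend: "\<exists>n m r. m \<in> M \<and> h ^ n = m + r * a" if "a \<notin> M" for a
  proof -
    let ?Ma = "{m + r * a |m r. m \<in> M}"
    have "M \<subseteq> ?Ma"
      by (force intro: exI[of _ 0])
    moreover have "a \<in> ?Ma"
      using ideal_zero[OF M(1)] by (force intro: exI[of _ 1])
    ultimately have "\<not> (\<forall>n. h ^ n \<notin> ?Ma)"
      using M_max[OF ideal_extend[OF M(1)]] \<open>a \<notin> M\<close> by blast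
    then show ?thesis by blast
  qed
  have "a \<in> M \<or> b \<in> M" if "a * b \<in> M" for a b
  proof (rule ccontr)
    assume "\<not> (a \<in> M \<or> b \<in> M)"
    with power_in_extend obtain i j m r m' r' where
      "m \<in> M" "h ^ i = m + r * a" "m' \<in> M" "h ^ j = m' + r' * b" by meson
    then have "h ^ (i + j) = m * h ^ j + r * a * m' + (r * r') * (a * b)"
      by (simp add: power_add algebra_simps)
    also have "\<dots> \<in> M"
      using M(1) \<open>m \<in> M\<close> \<open>m' \<in> M\<close> \<open>a * b \<in> M\<close>
      by (intro ideal_add ideal_mult_right[of M m] ideal_mult_left[of M m'] ideal_mult_left[of M "a * b"])
    finally show False
      using M(2) by blast
  qed
  then show ?thesis
    using M(1) M(2)[rule_format, of 0] by (auto simp: prime_ideal_def)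
qed

lemma exists_prime_ideal_notin:
  fixes h :: "'a::comm_ring_1"
  assumes "\<forall>n. h ^ n \<noteq> 0"
  obtains P where "prime_ideal P" "h \<notin> P"
proof -
  obtain M where M: "ideal M" "\<forall>n. h ^ n \<notin> M"
      "\<And>I. ideal I \<Longrightarrow> \<forall>n. h ^ n \<notin> I \<Longrightarrow> M \<subseteq> I \<Longrightarrow> I = M"
    using exists_maximal_ideal_avoiding_powers[OF assms] by blast
  then have "prime_ideal M"
    by (rule prime_ideal_if_maximal_avoiding_powers)
  moreover have "h \<notin> M"
    using M(2)[rule_format, of 1] by simp
  ultimately show thesis by (rule that)
qed

section \<open>Polynomials over a subring\<close>

definition subring :: "'a::comm_ring_1 set \<Rightarrow> bool" where
  "subring A \<longleftrightarrow> 1 \<in> A \<and> (\<forall>a\<in>A. \<forall>b\<in>A. a + b \<in> A \<and> a * b \<in> A \<and> a - b \<in> A)"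

lemma subring_one: "subring A \<Longrightarrow> 1 \<in> A"
  by (simp add: subring_def)

lemma subring_add: "subring A \<Longrightarrow> a \<in> A \<Longrightarrow> b \<in> A \<Longrightarrow> a + b \<in> A"
  by (simp add: subring_def)

lemma subring_mult: "subring A \<Longrightarrow> a \<in> A \<Longrightarrow> b \<in> A \<Longrightarrow> a * b \<in> A"
  by (simp add: subring_def)

lemma subring_diff: "subring A \<Longrightarrow> a \<in> A \<Longrightarrow> b \<in> A \<Longrightarrow> a - b \<in> A"
  by (simp add: subring_def)

lemma subring_zero: "subring A \<Longrightarrow> 0 \<in> A"
  using subring_diff[of A 1 1] subring_one[of A] by simp

lemma subring_minus: "subring A \<Longrightarrow> a \<in> A \<Longrightarrow> - a \<in> A"
  using subring_diff[of A 0 a] subring_zero[of A] by simp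

lemma subring_power: "subring A \<Longrightarrow> a \<in> A \<Longrightarrow> a ^ n \<in> A"
  by (induction n) (auto intro: subring_one subring_mult)

lemma subring_sum: "subring A \<Longrightarrow> (\<And>i. i \<in> S \<Longrightarrow> f i \<in> A) \<Longrightarrow> sum f S \<in> A"
  by (induction S rule: infinite_finite_induct) (auto intro: subring_zero subring_add)

definition polys_over :: "'a::zero set \<Rightarrow> 'a poly set" where
  "polys_over A = {p. \<forall>i. coeff p i \<in> A}"

definition adjoin :: "'a::comm_semiring_0 set \<Rightarrow> 'a \<Rightarrow> 'a set" where
  "adjoin A x = (\<lambda>p. poly p x) ` polys_over A"

lemma polys_over_coeff: "p \<in> polys_over A \<Longrightarrow> coeff p i \<in> A"
  by (simp add: polys_over_def)

lemma lead_coeff_polys_over: "p \<in> polys_over A \<Longrightarrow> lead_coeff p \<in> A"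
  by (simp add: polys_over_def)

lemma pCons_polys_over_iff: "pCons a p \<in> polys_over A \<longleftrightarrow> a \<in> A \<and> p \<in> polys_over A"
  by (auto simp: polys_over_def coeff_pCons split: nat.splits)

lemma degree_pseudo_division_step_less:
  fixes p q :: "'a::comm_ring_1 poly"
  assumes "degree q \<le> degree p" "0 < degree p"
  shows "degree (smult (lead_coeff q) p - monom (lead_coeff p) (degree p - degree q) * q) < degree p"
proof -
  have "coeff (smult (lead_coeff q) p - monom (lead_coeff p) (degree p - degree q) * q) i = 0"
    if "degree p \<le> i" for i
    using that assms(1) coeff_eq_0[of p i] coeff_eq_0[of q "i - (degree p - degree q)"]
    by (cases "i = degree p") (auto simp: coeff_monom_mult)
  then have "degree (smult (lead_coeff q) p - monom (lead_coeff p) (degree p - degree q) * q)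
      \<le> degree p - 1"
    by (intro degree_le) auto
  with assms(2) show ?thesis by linarith
qed

context
  fixes A :: "'a::comm_ring_1 set"
  assumes A: "subring A"
begin

lemma const_polys_over: "a \<in> A \<Longrightarrow> [:a:] \<in> polys_over A"
  by (simp add: pCons_polys_over_iff) (simp add: polys_over_def subring_zero[OF A])

lemma monom_polys_over: "a \<in> A \<Longrightarrow> monom a n \<in> polys_over A"
  by (simp add: polys_over_def coeff_monom subring_zero[OF A])

lemma one_polys_over: "1 \<in> polys_over A"
  using const_polys_over[OF subring_one[OF A]] by (simp add: one_pCons)

lemma X_polys_over: "[:0, 1:] \<in> polys_over A"
  using one_polys_over subring_zero[OF A] by (simp add: pCons_polys_over_iff one_pCons)

lemma add_polys_over: "p \<in> polys_over A \<Longrightarrow> q \<in> polys_over A \<Longrightarrow> p + q \<in> polys_over A"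
  by (simp add: polys_over_def subring_add[OF A])

lemma diff_polys_over: "p \<in> polys_over A \<Longrightarrow> q \<in> polys_over A \<Longrightarrow> p - q \<in> polys_over A"
  by (simp add: polys_over_def subring_diff[OF A])

lemma minus_polys_over: "p \<in> polys_over A \<Longrightarrow> - p \<in> polys_over A"
  by (simp add: polys_over_def subring_minus[OF A])

lemma mult_polys_over: "p \<in> polys_over A \<Longrightarrow> q \<in> polys_over A \<Longrightarrow> p * q \<in> polys_over A"
  by (auto simp: polys_over_def coeff_mult intro!: subring_sum[OF A] subring_mult[OF A])

lemma smult_polys_over: "a \<in> A \<Longrightarrow> p \<in> polys_over A \<Longrightarrow> smult a p \<in> polys_over A"
  by (simp add: polys_over_def subring_mult[OF A])

lemma poly_adjoin: "p \<in> polys_over A \<Longrightarrow> poly p x \<in> adjoin A x"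
  by (simp add: adjoin_def)

lemma pseudo_division_polys_over:
  assumes q: "q \<in> polys_over A" "0 < degree q" and p: "p \<in> polys_over A"
  obtains N w r where "w \<in> polys_over A" "r \<in> polys_over A"
    "smult (lead_coeff q ^ N) p = q * w + r" "degree r < degree q" "degree w \<le> degree p - degree q"
  using p
proof (induction "degree p" arbitrary: p thesis rule: less_induct)
  case less
  show ?case
  proof (cases "degree p < degree q")
    case True
    then show ?thesis
      using less.prems(1)[of 0 p 0] less.prems(2) by (simp add: polys_over_def subring_zero[OF A])
  next
    case False
    define a where "a = lead_coeff q"
    define e where "e = degree p - degree q"
    define p' where "p' = smult a p - monom (lead_coeff p) e * q"
    have a: "a \<in> A" and p'_A: "p' \<in> polys_over A"
      using q less.prems(2) unfolding a_def p'_def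
      by (auto intro!: diff_polys_over smult_polys_over mult_polys_over monom_polys_over
          lead_coeff_polys_over)
    have "degree p' < degree p"
      unfolding p'_def a_def e_def using False q(2)
      by (intro degree_pseudo_division_step_less) auto
    with less.hyps p'_A obtain N w r where wr: "w \<in> polys_over A" "r \<in> polys_over A"
        "smult (a ^ N) p' = q * w + r" "degree r < degree q" "degree w \<le> degree p' - degree q"
      unfolding a_def by metis
    define w' where "w' = w + monom (a ^ N * lead_coeff p) e"
    have "smult a p = p' + monom (lead_coeff p) e * q"
      by (simp add: p'_def)
    then have "smult (a ^ Suc N) p = smult (a ^ N) p' + smult (a ^ N) (monom (lead_coeff p) e * q)"
      by (simp only: power_Suc2 smult_smult[symmetric] smult_add_right)
    also have "smult (a ^ N) (monom (lead_coeff p) e * q) = q * monom (a ^ N * lead_coeff p) e"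
      by (simp only: mult.commute[of "monom _ _" q] mult_smult_right[symmetric] smult_monom)
    also have "smult (a ^ N) p' + q * monom (a ^ N * lead_coeff p) e = q * w' + r"
      using wr(3) by (simp add: w'_def distrib_left)
    finally have "smult (lead_coeff q ^ Suc N) p = q * w' + r"
      by (simp add: a_def)
    moreover have "w' \<in> polys_over A"
      using wr(1) a less.prems(2) unfolding w'_def
      by (intro add_polys_over monom_polys_over subring_mult[OF A] subring_power[OF A]
          lead_coeff_polys_over)
    moreover have "degree w' \<le> degree p - degree q"
      using wr(5) \<open>degree p' < degree p\<close> unfolding w'_def e_def
      by (intro degree_add_le degree_monom_le) linarith
    ultimately show ?thesis
      using less.prems(1) wr(2,4) by blast
  qed
qed

end

lemma truncate_to_lead_coeff_notin:
  assumes I: "ideal I" and p: "p \<in> polys_over A" "0 \<in> A" and i: "coeff p i \<notin> I"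
  obtains p' where "p' \<in> polys_over A" "lead_coeff p' \<notin> I" "degree p' \<le> degree p"
    "\<forall>j. coeff (p - p') j \<in> I"
proof -
  define m where "m = Max {j. coeff p j \<notin> I}"
  have "{j. coeff p j \<notin> I} \<subseteq> {..degree p}"
    using ideal_zero[OF I] by (auto intro!: le_degree)
  then have fin: "finite {j. coeff p j \<notin> I}"
    using finite_subset by blast
  then have m: "coeff p m \<notin> I" and m_max: "\<And>j. coeff p j \<notin> I \<Longrightarrow> j \<le> m"
    using i Max_in[OF fin] Max_ge[OF fin] unfolding m_def by blast+
  define p' where "p' = poly_cutoff (Suc m) p"
  have coeff_p': "coeff p' j = (if j \<le> m then coeff p j else 0)" for j
    by (simp add: p'_def coeff_poly_cutoff)
  have "degree p' = m"
    using m ideal_zero[OF I] by (intro antisym degree_le le_degree) (auto simp: coeff_p')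
  moreover have "m \<le> degree p"
    using m ideal_zero[OF I] le_degree by force
  moreover have "p' \<in> polys_over A"
    using p by (simp add: polys_over_def coeff_p')
  moreover have "\<forall>j. coeff (p - p') j \<in> I"
    using m_max ideal_zero[OF I] by (auto simp: coeff_p' not_le) (meson leD)
  ultimately show thesis
    using m that by (simp add: coeff_p')
qed

lemma truncate_relation:
  assumes I: "ideal I" and p: "p \<in> polys_over A" "0 \<in> A" "poly p x \<in> I" "p \<notin> polys_over I"
  obtains p' where "p' \<in> polys_over A" "poly p' x \<in> I" "lead_coeff p' \<notin> I" "degree p' \<le> degree p"
proof -
  obtain i where "coeff p i \<notin> I"
    using p(4) by (auto simp: polys_over_def)
  then obtain p' where p': "p' \<in> polys_over A" "lead_coeff p' \<notin> I" "degree p' \<le> degree p"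
      "\<forall>j. coeff (p - p') j \<in> I"
    using truncate_to_lead_coeff_notin[OF I p(1,2)] by metis
  have "poly p x - poly p' x \<in> I"
    using poly_mem_ideal[OF I p'(4)] by simp
  then have "poly p' x \<in> I"
    using ideal_diff_mem_iff[OF I] p(3) by blast
  with p' that show thesis by blast
qed

lemma poly_degree_0:
  assumes "degree p = 0"
  shows "poly p x = lead_coeff p"
proof -
  have "poly p x = poly [:coeff p 0:] x"
    using degree_0_id[OF assms] by simp
  with assms show ?thesis by simp
qed

section \<open>Subalgebras and their \<open>k\<close>-points\<close>

locale k_algebra =
  fixes iota :: "'a::field \<Rightarrow> 'b::comm_ring_1"
  assumes k_algebra_map: "k_algebra_map iota"
begin

lemma iota_add: "iota (a + b) = iota a + iota b"
  using k_algebra_map by (simp add: k_algebra_map_def)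

lemma iota_mult: "iota (a * b) = iota a * iota b"
  using k_algebra_map by (simp add: k_algebra_map_def)

lemma iota_one [simp]: "iota 1 = 1"
  using k_algebra_map by (simp add: k_algebra_map_def)

lemma iota_zero [simp]: "iota 0 = 0"
  using iota_add[of 0 0] by simp

lemma iota_diff: "iota (a - b) = iota a - iota b"
  using iota_add[of "a - b" b] by (simp add: eq_diff_eq)

lemma iota_mem_proper_ideal: "ideal I \<Longrightarrow> 1 \<notin> I \<Longrightarrow> iota c \<in> I \<Longrightarrow> c = 0"
  by (metis ideal_mult_left iota_mult iota_one left_inverse)

lemma inj_iota: "inj iota"
proof (rule injI)
  fix a b assume "iota a = iota b"
  then have "iota (a - b) \<in> {0}"
    by (simp add: iota_diff)
  moreover have "ideal {0::'b}"
    by (simp add: ideal_def)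
  ultimately have "a - b = 0"
    using iota_mem_proper_ideal[of "{0}" "a - b"] by simp
  then show "a = b" by simp
qed

definition subalgebra :: "'b set \<Rightarrow> bool" where
  "subalgebra A \<longleftrightarrow> range iota \<subseteq> A \<and> (\<forall>a\<in>A. \<forall>b\<in>A. a + b \<in> A \<and> a * b \<in> A)"

lemma subalgebra_iota: "subalgebra A \<Longrightarrow> iota c \<in> A"
  by (auto simp: subalgebra_def)

lemma subalgebra_subring: "subalgebra A \<Longrightarrow> subring A"
  unfolding subring_def
proof (intro conjI ballI)
  assume A: "subalgebra A"
  show "1 \<in> A"
    using subalgebra_iota[OF A, of 1] by simp
  have closed: "a + b \<in> A" "a * b \<in> A" if "a \<in> A" "b \<in> A" for a b
    using A that by (auto simp: subalgebra_def)
  fix a b assume "a \<in> A" "b \<in> A"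
  then show "a + b \<in> A" "a * b \<in> A"
    by (rule closed)+
  have "a + iota (- 1) * b \<in> A"
    using \<open>a \<in> A\<close> \<open>b \<in> A\<close> by (intro closed subalgebra_iota[OF A])
  moreover have "a + iota (- 1) * b = a - b"
    by (simp add: iota_diff[of 0 1, simplified])
  ultimately show "a - b \<in> A" by simp
qed

lemma subalgebra_subalg_gen: "subalgebra (subalg_gen iota S)"
  by (auto simp: subalgebra_def intro: subalg_gen.intros)

lemma subalg_gen_minimal: "subalgebra B \<Longrightarrow> S \<subseteq> B \<Longrightarrow> subalg_gen iota S \<subseteq> B"
proof
  fix y assume B: "subalgebra B" "S \<subseteq> B" and "y \<in> subalg_gen iota S"
  from \<open>y \<in> subalg_gen iota S\<close> show "y \<in> B"
    by induction (use B in \<open>auto simp: subalgebra_def\<close>)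
qed

lemma subalgebra_adjoin:
  assumes A: "subalgebra A"
  shows "subalgebra (adjoin A x)"
  unfolding subalgebra_def
proof (intro conjI ballI)
  show "range iota \<subseteq> adjoin A x"
  proof
    fix y assume "y \<in> range iota"
    then obtain c where "y = poly [:iota c:] x" by auto
    moreover have "poly [:iota c:] x \<in> adjoin A x"
      using A by (intro poly_adjoin const_polys_over subalgebra_subring subalgebra_iota)
    ultimately show "y \<in> adjoin A x" by simp
  qed
  fix a b assume "a \<in> adjoin A x" "b \<in> adjoin A x"
  then obtain p q where pq: "p \<in> polys_over A" "q \<in> polys_over A" "a = poly p x" "b = poly q x"
    by (auto simp: adjoin_def)
  have "poly (p + q) x \<in> adjoin A x" "poly (p * q) x \<in> adjoin A x"
    using pq(1,2) subalgebra_subring[OF A]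
    by (simp_all add: poly_adjoin add_polys_over mult_polys_over del: poly_add poly_mult)
  then show "a + b \<in> adjoin A x" "a * b \<in> adjoin A x"
    using pq(3,4) by simp_all
qed

lemma adjoin_subset:
  assumes B: "subalgebra B" and "A \<subseteq> B" "x \<in> B"
  shows "adjoin A x \<subseteq> B"
proof
  fix y assume "y \<in> adjoin A x"
  then obtain p where "p \<in> polys_over A" "y = poly p x"
    by (auto simp: adjoin_def)
  then show "y \<in> B"
  proof (induction p arbitrary: y)
    case (pCons a p)
    then show ?case
      using assms subalgebra_subring[OF B]
      by (auto simp: pCons_polys_over_iff intro!: subring_add subring_mult)
  qed (use subring_zero subalgebra_subring[OF B] in auto)
qed

lemma subalg_gen_empty: "subalg_gen iota {} = range iota"
proof
  have "subalgebra (range iota)"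
    by (auto simp: subalgebra_def iota_add[symmetric] iota_mult[symmetric])
  then show "subalg_gen iota {} \<subseteq> range iota"
    by (simp add: subalg_gen_minimal)
qed (auto intro: subalg_gen.scalar)

lemma subalg_gen_insert: "subalg_gen iota (insert x S) = adjoin (subalg_gen iota S) x"
proof
  have subset: "subalg_gen iota S \<subseteq> adjoin (subalg_gen iota S) x"
  proof
    fix a assume "a \<in> subalg_gen iota S"
    then have "poly [:a:] x \<in> adjoin (subalg_gen iota S) x"
      by (intro poly_adjoin const_polys_over subalgebra_subring subalgebra_subalg_gen)
    then show "a \<in> adjoin (subalg_gen iota S) x" by simp
  qed
  moreover have "x \<in> adjoin (subalg_gen iota S) x"
    using poly_adjoin[OF _ X_polys_over, of "subalg_gen iota S" x]
    by (simp add: subalgebra_subring subalgebra_subalg_gen)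
  ultimately show "subalg_gen iota (insert x S) \<subseteq> adjoin (subalg_gen iota S) x"
    by (intro subalg_gen_minimal subalgebra_adjoin subalgebra_subalg_gen)
      (auto intro: subalg_gen.gen)
  show "adjoin (subalg_gen iota S) x \<subseteq> subalg_gen iota (insert x S)"
    by (intro adjoin_subset subalgebra_subalg_gen subalg_gen_minimal)
      (auto intro: subalg_gen.gen)
qed

definition k_hom_on :: "'b set \<Rightarrow> ('b \<Rightarrow> 'a) \<Rightarrow> bool" where
  "k_hom_on A f \<longleftrightarrow> (\<forall>c. f (iota c) = c) \<and>
     (\<forall>a\<in>A. \<forall>b\<in>A. f (a + b) = f a + f b \<and> f (a * b) = f a * f b)"

definition hom_mod :: "'b set \<Rightarrow> 'b set \<Rightarrow> ('b \<Rightarrow> 'a) \<Rightarrow> bool" where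
  "hom_mod A P f \<longleftrightarrow> k_hom_on A f \<and> (\<forall>a\<in>A \<inter> P. f a = 0)"

lemma k_hom_on_iota: "k_hom_on A f \<Longrightarrow> f (iota c) = c"
  by (simp add: k_hom_on_def)

lemma k_hom_on_zero: "k_hom_on A f \<Longrightarrow> f 0 = 0"
  using k_hom_on_iota[of A f 0] by simp

lemma k_hom_on_one: "k_hom_on A f \<Longrightarrow> f 1 = 1"
  using k_hom_on_iota[of A f 1] by simp

lemma k_hom_on_add: "k_hom_on A f \<Longrightarrow> a \<in> A \<Longrightarrow> b \<in> A \<Longrightarrow> f (a + b) = f a + f b"
  by (simp add: k_hom_on_def)

lemma k_hom_on_mult: "k_hom_on A f \<Longrightarrow> a \<in> A \<Longrightarrow> b \<in> A \<Longrightarrow> f (a * b) = f a * f b"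
  by (simp add: k_hom_on_def)

lemma coeff_map_poly_k_hom: "k_hom_on A f \<Longrightarrow> coeff (map_poly f p) i = f (coeff p i)"
  by (simp add: coeff_map_poly k_hom_on_zero)

context
  fixes A f
  assumes A: "subalgebra A" and f: "k_hom_on A f"
begin

lemma k_hom_on_diff: "a \<in> A \<Longrightarrow> b \<in> A \<Longrightarrow> f (a - b) = f a - f b"
  using k_hom_on_add[OF f, of "a - b" b] subring_diff[OF subalgebra_subring[OF A]]
  by (simp add: eq_diff_eq)

lemma k_hom_on_power: "a \<in> A \<Longrightarrow> f (a ^ n) = f a ^ n"
  by (induction n)
    (simp_all add: k_hom_on_one[OF f] k_hom_on_mult[OF f] subring_power[OF subalgebra_subring[OF A]])

lemma k_hom_on_sum: "(\<And>i. i \<in> S \<Longrightarrow> g i \<in> A) \<Longrightarrow> f (sum g S) = (\<Sum>i\<in>S. f (g i))"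
  by (induction S rule: infinite_finite_induct)
    (simp_all add: k_hom_on_zero[OF f] k_hom_on_add[OF f] subring_sum[OF subalgebra_subring[OF A]])

lemma map_poly_add_k_hom:
  "p \<in> polys_over A \<Longrightarrow> q \<in> polys_over A \<Longrightarrow> map_poly f (p + q) = map_poly f p + map_poly f q"
  by (rule poly_eqI) (simp add: coeff_map_poly_k_hom[OF f] k_hom_on_add[OF f] polys_over_coeff)

lemma map_poly_diff_k_hom:
  "p \<in> polys_over A \<Longrightarrow> q \<in> polys_over A \<Longrightarrow> map_poly f (p - q) = map_poly f p - map_poly f q"
  by (rule poly_eqI) (simp add: coeff_map_poly_k_hom[OF f] k_hom_on_diff polys_over_coeff)

lemma map_poly_mult_k_hom:
  assumes "p \<in> polys_over A" "q \<in> polys_over A"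
  shows "map_poly f (p * q) = map_poly f p * map_poly f q"
proof (rule poly_eqI)
  fix n
  have "f (\<Sum>i\<le>n. coeff p i * coeff q (n - i)) = (\<Sum>i\<le>n. f (coeff p i) * f (coeff q (n - i)))"
    using assms subalgebra_subring[OF A]
    by (simp add: k_hom_on_sum k_hom_on_mult[OF f] polys_over_coeff subring_mult)
  then show "coeff (map_poly f (p * q)) n = coeff (map_poly f p * map_poly f q) n"
    by (simp add: coeff_map_poly_k_hom[OF f] coeff_mult)
qed

lemma map_poly_smult_k_hom:
  "a \<in> A \<Longrightarrow> p \<in> polys_over A \<Longrightarrow> map_poly f (smult a p) = smult (f a) (map_poly f p)"
  by (rule poly_eqI) (simp add: coeff_map_poly_k_hom[OF f] k_hom_on_mult[OF f] polys_over_coeff)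

lemma map_poly_const_k_hom: "map_poly f [:a:] = [:f a:]"
  by (rule poly_eqI) (simp add: coeff_map_poly_k_hom[OF f] coeff_pCons k_hom_on_zero[OF f] split: nat.split)

end

lemma map_poly_hom_mod_eq_0:
  assumes f: "hom_mod A P f" and "p \<in> polys_over A" "p \<in> polys_over P"
  shows "map_poly f p = 0"
proof (rule poly_eqI)
  fix n
  have "coeff p n \<in> A \<inter> P"
    using assms by (simp add: polys_over_coeff)
  with f have "f (coeff p n) = 0"
    by (simp add: hom_mod_def)
  with f show "coeff (map_poly f p) n = coeff 0 n"
    by (simp add: hom_mod_def coeff_map_poly_k_hom[of A f])
qed

lemma extend_hom_adjoin:
  assumes A: "subalgebra A" and P: "ideal P" and f: "k_hom_on A f"
    and relations: "\<And>p. p \<in> polys_over A \<Longrightarrow> poly p x \<in> P \<Longrightarrow> poly (map_poly f p) \<xi> = 0"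
  obtains g where "hom_mod (adjoin A x) P g"
    "\<And>p. p \<in> polys_over A \<Longrightarrow> g (poly p x) = poly (map_poly f p) \<xi>"
proof -
  define g where "g b = poly (map_poly f (SOME p. p \<in> polys_over A \<and> poly p x = b)) \<xi>" for b
  have g_poly: "g (poly p x) = poly (map_poly f p) \<xi>" if p: "p \<in> polys_over A" for p
  proof -
    define p' where "p' = (SOME p'. p' \<in> polys_over A \<and> poly p' x = poly p x)"
    have p': "p' \<in> polys_over A" "poly p' x = poly p x"
      using someI[of "\<lambda>p'. p' \<in> polys_over A \<and> poly p' x = poly p x" p] p by (auto simp: p'_def)
    then have "poly (map_poly f (p' - p)) \<xi> = 0"
      using p A ideal_zero[OF P] by (intro relations diff_polys_over subalgebra_subring) auto
    then show ?thesis
      using p p' by (simp add: g_def p'_def map_poly_diff_k_hom[OF A f])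
  qed
  have "k_hom_on (adjoin A x) g"
    unfolding k_hom_on_def
  proof (intro conjI allI ballI)
    fix c
    have "[:iota c:] \<in> polys_over A"
      using A by (intro const_polys_over subalgebra_subring subalgebra_iota)
    from g_poly[OF this] have "g (poly [:iota c:] x) = f (iota c)"
      by (simp add: map_poly_const_k_hom[OF A f])
    then show "g (iota c) = c"
      using k_hom_on_iota[OF f] by simp
  next
    fix a b assume "a \<in> adjoin A x" "b \<in> adjoin A x"
    then obtain p q where pq: "p \<in> polys_over A" "q \<in> polys_over A" "a = poly p x" "b = poly q x"
      by (auto simp: adjoin_def)
    then show "g (a + b) = g a + g b" "g (a * b) = g a * g b"
      using A subalgebra_subring[OF A]
      by (simp_all add: g_poly add_polys_over mult_polys_over flip: poly_add poly_mult)
        (simp_all add: map_poly_add_k_hom[OF A f] map_poly_mult_k_hom[OF A f])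
  qed
  moreover have "g b = 0" if "b \<in> adjoin A x \<inter> P" for b
    using that relations by (auto simp: adjoin_def g_poly)
  ultimately show thesis
    using that g_poly by (auto simp: hom_mod_def)
qed

end

section \<open>The weak Nullstellensatz\<close>

lemma alg_closed_infinite:
  assumes "alg_closed TYPE('a::field)"
  shows "infinite (UNIV :: 'a set)"
proof
  assume fin: "finite (UNIV :: 'a set)"
  define vanishing :: "'a poly" where "vanishing = (\<Prod>a\<in>UNIV. [:- a, 1:])"
  have "degree vanishing = card (UNIV :: 'a set)"
    by (simp add: vanishing_def degree_prod_eq_sum_degree)
  moreover have "0 < card (UNIV :: 'a set)"
    using fin by (simp add: card_gt_0_iff)
  ultimately have "1 \<le> degree (vanishing + 1)"
    by (simp add: degree_add_eq_left)
  then obtain x where "poly (vanishing + 1) x = 0"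
    using assms by (auto simp: alg_closed_def)
  moreover have "poly vanishing x = 0"
    using fin by (simp add: vanishing_def poly_prod prod_zero_iff)
  ultimately show False by simp
qed

context k_algebra
begin

lemma extend_hom_transcendental:
  assumes infinite: "infinite (UNIV :: 'a set)" and A: "subalgebra A" and P: "ideal P"
    and transcendental: "\<And>p. p \<in> polys_over A \<Longrightarrow> poly p x \<in> P \<Longrightarrow> p \<in> polys_over P"
    and r: "r \<in> polys_over A" "r \<notin> polys_over P"
  obtains u where "u \<in> A" "u \<notin> P"
    "\<And>f. hom_mod A P f \<Longrightarrow> f u \<noteq> 0 \<Longrightarrow> \<exists>g. hom_mod (adjoin A x) P g \<and> g (poly r x) \<noteq> 0"
proof -
  have A_ring: "subring A"
    using A by (rule subalgebra_subring)
  obtain i where "coeff r i \<notin> P"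
    using r(2) by (auto simp: polys_over_def)
  then obtain r' where r': "r' \<in> polys_over A" "lead_coeff r' \<notin> P" "\<forall>j. coeff (r - r') j \<in> P"
    using truncate_to_lead_coeff_notin[OF P r(1) subring_zero[OF A_ring]] by metis
  show thesis
  proof (rule that)
    show "lead_coeff r' \<in> A" "lead_coeff r' \<notin> P"
      using r' by (simp_all add: lead_coeff_polys_over)
    fix f assume f: "hom_mod A P f" "f (lead_coeff r') \<noteq> 0"
    then have hom: "k_hom_on A f"
      by (simp add: hom_mod_def)
    have "map_poly f r' \<noteq> 0"
      using f(2) coeff_map_poly_k_hom[OF hom, of r' "degree r'"] by auto
    then obtain \<xi> where \<xi>: "poly (map_poly f r') \<xi> \<noteq> 0"
      using ex_new_if_finite[OF infinite poly_roots_finite] by blast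
    have "r - r' \<in> polys_over A"
      using A_ring r(1) r'(1) by (rule diff_polys_over)
    moreover have "r - r' \<in> polys_over P"
      using r'(3) by (simp add: polys_over_def)
    ultimately have "map_poly f (r - r') = 0"
      by (rule map_poly_hom_mod_eq_0[OF f(1)])
    then have same_image: "map_poly f r = map_poly f r'"
      using map_poly_diff_k_hom[OF A hom r(1) r'(1)] by simp
    have relations: "poly (map_poly f p) \<xi> = 0" if "p \<in> polys_over A" "poly p x \<in> P" for p
      using map_poly_hom_mod_eq_0[OF f(1) that(1) transcendental[OF that]] by simp
    obtain g where g: "hom_mod (adjoin A x) P g"
      "\<And>p. p \<in> polys_over A \<Longrightarrow> g (poly p x) = poly (map_poly f p) \<xi>"
      using extend_hom_adjoin[OF A P hom relations] by blast
    then show "\<exists>g. hom_mod (adjoin A x) P g \<and> g (poly r x) \<noteq> 0"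
      using \<xi> r(1) same_image by auto
  qed
qed

end

text \<open>In the algebraic case, \<open>q\<close> plays the role of a minimal polynomial of \<open>x\<close> over \<open>A/P\<close>.\<close>

locale minimal_relation = k_algebra iota
  for iota :: "'a::field \<Rightarrow> 'b::comm_ring_1" +
  fixes A P x q
  assumes subalgebra: "subalgebra A" and prime: "prime_ideal P"
    and relation: "q \<in> polys_over A" "poly q x \<in> P" "lead_coeff q \<notin> P"
    and minimal: "\<And>p. p \<in> polys_over A \<Longrightarrow> poly p x \<in> P \<Longrightarrow> lead_coeff p \<notin> P \<Longrightarrow> degree q \<le> degree p"
begin

lemma A_subring: "subring A"
  using subalgebra by (rule subalgebra_subring)

lemma P_ideal: "ideal P"
  using prime by (rule prime_ideal_ideal)

lemma degree_pos: "0 < degree q"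
  using relation(2,3) poly_degree_0[of q x] by (cases "degree q") auto

lemma low_degree_relation_trivial:
  assumes p: "p \<in> polys_over A" "poly p x \<in> P" "degree p < degree q"
  shows "p \<in> polys_over P"
proof (rule ccontr)
  assume "p \<notin> polys_over P"
  then obtain p' where "p' \<in> polys_over A" "poly p' x \<in> P" "lead_coeff p' \<notin> P" "degree p' \<le> degree p"
    using truncate_relation[OF P_ideal p(1) subring_zero[OF A_subring] p(2)] by blast
  then show False
    using minimal p(3) by fastforce
qed

lemma relation_pseudo_remainder:
  assumes p: "p \<in> polys_over A" "poly p x \<in> P"
  obtains N w r where "w \<in> polys_over A" "r \<in> polys_over A" "r \<in> polys_over P"
    "smult (lead_coeff q ^ N) p = q * w + r"
proof -
  obtain N w r where div: "w \<in> polys_over A" "r \<in> polys_over A"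
      "smult (lead_coeff q ^ N) p = q * w + r" "degree r < degree q"
    using pseudo_division_polys_over[OF A_subring relation(1) degree_pos p(1)] by metis
  have "poly r x = lead_coeff q ^ N * poly p x - poly q x * poly w x"
    using arg_cong[OF div(3), of "\<lambda>p. poly p x"] by simp
  also have "\<dots> \<in> P"
    using P_ideal p(2) relation(2) by (intro ideal_diff ideal_mult_left ideal_mult_right)
  finally have "r \<in> polys_over P"
    using low_degree_relation_trivial div(2,4) by blast
  with div that show thesis by blast
qed

lemma pseudo_remainder_notin:
  assumes r0: "r0 \<in> polys_over A" "poly r0 x \<notin> P" "lead_coeff r0 \<notin> P"
      "0 < degree r0" "degree r0 < degree q"
    and div: "w \<in> polys_over A" "smult (lead_coeff r0 ^ M) q = r0 * w + r2"
      "degree r2 < degree r0" "degree w \<le> degree q - degree r0"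
  shows "poly r2 x \<notin> P"
proof
  assume "poly r2 x \<in> P"
  moreover have "lead_coeff r0 ^ M * poly q x = poly r0 x * poly w x + poly r2 x"
    using arg_cong[OF div(2), of "\<lambda>p. poly p x"] by simp
  ultimately have "poly r0 x * poly w x \<in> P"
    using ideal_diff[OF P_ideal ideal_mult_left[OF P_ideal relation(2)]]
    by (metis add_diff_cancel_right')
  then have "poly w x \<in> P"
    using prime r0(2) by (auto simp: prime_ideal_def)
  moreover have "degree w < degree q"
    using div(4) r0(4) degree_pos by linarith
  ultimately have "w \<in> polys_over P"
    using low_degree_relation_trivial div(1) by blast
  then have "coeff (r0 * w) (degree q) \<in> P"
    unfolding coeff_mult
    by (intro ideal_sum[OF P_ideal] ideal_mult_left[OF P_ideal] polys_over_coeff)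
  moreover have "coeff r2 (degree q) = 0"
    using div(3) r0(5) by (intro coeff_eq_0) linarith
  ultimately have "lead_coeff r0 ^ M * lead_coeff q \<in> P"
    using arg_cong[OF div(2), of "\<lambda>p. coeff p (degree q)"] by simp
  then show False
    using prime_ideal_mult_notin[OF prime prime_ideal_power_notin[OF prime r0(3)] relation(3)]
    by simp
qed

text \<open>A Euclidean algorithm modulo \<open>P\<close> against the minimal relation \<open>q\<close>.\<close>

lemma inverse_mod_low_degree:
  assumes "r \<in> polys_over A" "poly r x \<notin> P" "degree r < degree q"
  shows "\<exists>t\<in>polys_over A. \<exists>d\<in>A. d \<notin> P \<and> poly t x * poly r x - d \<in> P"
  using assms
proof (induction "degree r" arbitrary: r rule: less_induct)
  case less
  obtain i where "coeff r i \<notin> P"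
    using less.prems(2) poly_mem_ideal[OF P_ideal] by blast
  then obtain r0 where r0: "r0 \<in> polys_over A" "lead_coeff r0 \<notin> P" "degree r0 \<le> degree r"
      "\<forall>j. coeff (r - r0) j \<in> P"
    using truncate_to_lead_coeff_notin[OF P_ideal less.prems(1) subring_zero[OF A_subring]] by metis
  have r_r0: "poly r x - poly r0 x \<in> P"
    using poly_mem_ideal[OF P_ideal r0(4)] by simp
  show ?case
  proof (cases "degree r0 = 0")
    case True
    then have "poly 1 x * poly r x - lead_coeff r0 \<in> P"
      using r_r0 poly_degree_0[OF True, of x] by simp
    then show ?thesis
      using r0 one_polys_over[OF A_subring] lead_coeff_polys_over by blast
  next
    case False
    have r0_P: "poly r0 x \<notin> P"
      using ideal_diff_mem_iff[OF P_ideal r_r0] less.prems(2) by blast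
    obtain M w r2 where div: "w \<in> polys_over A" "r2 \<in> polys_over A"
        "smult (lead_coeff r0 ^ M) q = r0 * w + r2" "degree r2 < degree r0"
        "degree w \<le> degree q - degree r0"
      using pseudo_division_polys_over[OF A_subring r0(1) _ relation(1)] False by (metis neq0_conv)
    have r2: "poly r2 x \<notin> P"
      using pseudo_remainder_notin[OF r0(1) r0_P r0(2) _ _ div(1,3,4,5)] False r0(3) less.prems(3)
      by linarith
    obtain t2 d where t2: "t2 \<in> polys_over A" "d \<in> A" "d \<notin> P" "poly t2 x * poly r2 x - d \<in> P"
      using less.hyps[OF _ div(2) r2] div(4) r0(3) less.prems(3) by force
    have inverse_eq: "poly (- (t2 * w)) x * poly r x - d
        = poly t2 x * poly r2 x - d - poly t2 x * (poly r2 x + poly r x * poly w x)"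
      by (simp add: algebra_simps)
    have "poly r2 x + poly r x * poly w x
        = lead_coeff r0 ^ M * poly q x + (poly r x - poly r0 x) * poly w x"
      using arg_cong[OF div(3), of "\<lambda>p. poly p x"] by (simp add: algebra_simps)
    also have "\<dots> \<in> P"
      using P_ideal relation(2) r_r0 by (intro ideal_add ideal_mult_left ideal_mult_right)
    finally have "poly (- (t2 * w)) x * poly r x - d \<in> P"
      unfolding inverse_eq by (rule ideal_diff[OF P_ideal t2(4) ideal_mult_left[OF P_ideal]])
    moreover have "- (t2 * w) \<in> polys_over A"
      using A_subring t2(1) div(1) by (intro minus_polys_over mult_polys_over)
    ultimately show ?thesis
      using t2(2,3) by blast
  qed
qed

lemma inverse_mod:
  assumes r: "r \<in> polys_over A" "poly r x \<notin> P"
  obtains t d where "t \<in> polys_over A" "d \<in> A" "d \<notin> P" "poly t x * poly r x - d \<in> P"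
proof -
  define a where "a = lead_coeff q"
  obtain N w r1 where div: "w \<in> polys_over A" "r1 \<in> polys_over A"
      "smult (a ^ N) r = q * w + r1" "degree r1 < degree q"
    using pseudo_division_polys_over[OF A_subring relation(1) degree_pos r(1)] unfolding a_def by metis
  have "a ^ N * poly r x - poly r1 x = poly q x * poly w x"
    using arg_cong[OF div(3), of "\<lambda>p. poly p x"] by simp
  then have r_r1: "a ^ N * poly r x - poly r1 x \<in> P"
    using ideal_mult_right[OF P_ideal relation(2)] by simp
  moreover have "a ^ N * poly r x \<notin> P"
    using prime_ideal_mult_notin[OF prime prime_ideal_power_notin[OF prime] r(2)] relation(3)
    by (simp add: a_def)
  ultimately have "poly r1 x \<notin> P"
    using ideal_diff_mem_iff[OF P_ideal] by blast
  then obtain t1 d where t1: "t1 \<in> polys_over A" "d \<in> A" "d \<notin> P" "poly t1 x * poly r1 x - d \<in> P"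
    using inverse_mod_low_degree div(2,4) by blast
  have "poly (smult (a ^ N) t1) x * poly r x - d
      = poly t1 x * (a ^ N * poly r x - poly r1 x) + (poly t1 x * poly r1 x - d)"
    by (simp add: algebra_simps)
  also have "\<dots> \<in> P"
    using P_ideal r_r1 t1(4) by (intro ideal_add ideal_mult_left)
  finally show thesis
    using that t1(1-3) A_subring relation(1)
    by (metis a_def lead_coeff_polys_over smult_polys_over subring_power)
qed

lemma relations_vanish_at_root:
  assumes f: "hom_mod A P f" "f (lead_coeff q) \<noteq> 0" and root: "poly (map_poly f q) \<xi> = 0"
    and p: "p \<in> polys_over A" "poly p x \<in> P"
  shows "poly (map_poly f p) \<xi> = 0"
proof -
  have hom: "k_hom_on A f" and a: "lead_coeff q \<in> A"
    using f(1) relation(1) by (simp_all add: hom_mod_def lead_coeff_polys_over)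
  obtain N w r where div: "w \<in> polys_over A" "r \<in> polys_over A" "r \<in> polys_over P"
      "smult (lead_coeff q ^ N) p = q * w + r"
    using relation_pseudo_remainder[OF p] by blast
  have "smult (f (lead_coeff q) ^ N) (map_poly f p) = map_poly f (smult (lead_coeff q ^ N) p)"
    using map_poly_smult_k_hom[OF subalgebra hom subring_power[OF A_subring a] p(1)]
    by (simp add: k_hom_on_power[OF subalgebra hom a])
  also have "\<dots> = map_poly f q * map_poly f w"
    using div relation(1) A_subring f(1)
    by (simp add: map_poly_add_k_hom[OF subalgebra hom] map_poly_mult_k_hom[OF subalgebra hom]
        mult_polys_over map_poly_hom_mod_eq_0)
  finally show ?thesis
    using root f(2) by (metis mult_eq_0_iff poly_mult poly_smult power_not_zero)
qed

lemma extend_hom_algebraic: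
  assumes closed: "alg_closed TYPE('a)" and r: "r \<in> polys_over A" "poly r x \<notin> P"
  obtains u where "u \<in> A" "u \<notin> P"
    "\<And>f. hom_mod A P f \<Longrightarrow> f u \<noteq> 0 \<Longrightarrow> \<exists>g. hom_mod (adjoin A x) P g \<and> g (poly r x) \<noteq> 0"
proof -
  obtain t d where td: "t \<in> polys_over A" "d \<in> A" "d \<notin> P" "poly t x * poly r x - d \<in> P"
    using inverse_mod[OF r] by blast
  have a: "lead_coeff q \<in> A"
    using relation(1) by (rule lead_coeff_polys_over)
  show thesis
  proof (rule that)
    show "lead_coeff q * d \<in> A"
      using A_subring a td(2) by (rule subring_mult)
    show "lead_coeff q * d \<notin> P"
      using prime relation(3) td(3) by (rule prime_ideal_mult_notin)
    fix f assume f: "hom_mod A P f" "f (lead_coeff q * d) \<noteq> 0"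
    then have hom: "k_hom_on A f" and fa: "f (lead_coeff q) \<noteq> 0" and fd: "f d \<noteq> 0"
      using k_hom_on_mult[of A f, OF _ a td(2)] by (auto simp: hom_mod_def)
    have "degree q \<le> degree (map_poly f q)"
      using fa by (intro le_degree) (simp add: coeff_map_poly_k_hom[OF hom])
    then have "1 \<le> degree (map_poly f q)"
      using degree_pos by linarith
    then obtain \<xi> where root: "poly (map_poly f q) \<xi> = 0"
      using closed unfolding alg_closed_def by blast
    note relations = relations_vanish_at_root[OF f(1) fa root]
    obtain g where g: "hom_mod (adjoin A x) P g"
      "\<And>p. p \<in> polys_over A \<Longrightarrow> g (poly p x) = poly (map_poly f p) \<xi>"
      using extend_hom_adjoin[OF subalgebra P_ideal hom relations] by blast
    have tr: "t * r - [:d:] \<in> polys_over A"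
      using A_subring td(1,2) r(1) by (intro diff_polys_over mult_polys_over const_polys_over)
    have "poly (map_poly f (t * r - [:d:])) \<xi> = 0"
      using relations[OF tr] td(4) by simp
    then have "poly (map_poly f t) \<xi> * g (poly r x) = f d"
      using A_subring td(1,2) r(1) g(2)[OF r(1)]
      by (simp add: map_poly_diff_k_hom[OF subalgebra hom] map_poly_mult_k_hom[OF subalgebra hom]
          map_poly_const_k_hom[OF subalgebra hom] mult_polys_over const_polys_over)
    with fd g(1) show "\<exists>g. hom_mod (adjoin A x) P g \<and> g (poly r x) \<noteq> 0"
      by auto
  qed
qed

end

context k_algebra
begin

lemma exists_minimal_relation:
  assumes A: "subalgebra A" and P: "ideal P"
    and p: "p \<in> polys_over A" "poly p x \<in> P" "p \<notin> polys_over P"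
  obtains q where "q \<in> polys_over A" "poly q x \<in> P" "lead_coeff q \<notin> P"
    "\<And>p. p \<in> polys_over A \<Longrightarrow> poly p x \<in> P \<Longrightarrow> lead_coeff p \<notin> P \<Longrightarrow> degree q \<le> degree p"
proof -
  obtain p' where "p' \<in> polys_over A" "poly p' x \<in> P" "lead_coeff p' \<notin> P"
    using truncate_relation[OF P p(1) subring_zero[OF subalgebra_subring[OF A]] p(2,3)] by blast
  then show thesis
    using ex_has_least_nat[of "\<lambda>p. p \<in> polys_over A \<and> poly p x \<in> P \<and> lead_coeff p \<notin> P" p' degree]
      that by blast
qed

lemma extend_hom_adjoin_nonvanishing:
  assumes closed: "alg_closed TYPE('a)" and A: "subalgebra A" and P: "prime_ideal P"
    and v: "v \<in> adjoin A x" "v \<notin> P"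
  obtains u where "u \<in> A" "u \<notin> P"
    "\<And>f. hom_mod A P f \<Longrightarrow> f u \<noteq> 0 \<Longrightarrow> \<exists>g. hom_mod (adjoin A x) P g \<and> g v \<noteq> 0"
proof -
  obtain r where r: "r \<in> polys_over A" "v = poly r x"
    using v(1) by (auto simp: adjoin_def)
  show thesis
  proof (cases "\<exists>p\<in>polys_over A. poly p x \<in> P \<and> p \<notin> polys_over P")
    case True
    then obtain q where q: "q \<in> polys_over A" "poly q x \<in> P" "lead_coeff q \<notin> P"
      and q_min: "\<And>p. p \<in> polys_over A \<Longrightarrow> poly p x \<in> P \<Longrightarrow> lead_coeff p \<notin> P \<Longrightarrow> degree q \<le> degree p"
      using exists_minimal_relation[OF A prime_ideal_ideal[OF P]] by blast
    interpret minimal_relation iota A P x q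
      using A P q q_min by unfold_locales auto
    show thesis
      using extend_hom_algebraic[OF closed r(1)] v(2) r(2) that by blast
  next
    case False
    have "r \<notin> polys_over P"
      using poly_mem_ideal[OF prime_ideal_ideal[OF P]] v(2) r(2) by (auto simp: polys_over_def)
    then show thesis
      using extend_hom_transcendental[OF alg_closed_infinite[OF closed] A prime_ideal_ideal[OF P] _ r(1)]
        False r(2) that by blast
  qed
qed

lemma hom_mod_scalars:
  assumes P: "prime_ideal P"
  shows "hom_mod (range iota) P (inv iota)"
  unfolding hom_mod_def k_hom_on_def
proof (intro conjI allI ballI)
  show "inv iota (iota c) = c" for c
    by (rule inv_f_f[OF inj_iota])
  fix a b assume "a \<in> range iota" "b \<in> range iota"
  then obtain c c' where "a = iota c" "b = iota c'" by blast
  then show "inv iota (a + b) = inv iota a + inv iota b" "inv iota (a * b) = inv iota a * inv iota b"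
    by (simp_all add: inv_f_f[OF inj_iota] flip: iota_add iota_mult)
next
  fix a assume "a \<in> range iota \<inter> P"
  then obtain c where "a = iota c" "iota c \<in> P" by blast
  moreover from this P have "c = 0"
    using iota_mem_proper_ideal[of P c] by (simp add: prime_ideal_def)
  ultimately show "inv iota a = 0"
    using inv_f_f[OF inj_iota, of c] by simp
qed

lemma exists_hom_mod_nonvanishing:
  assumes closed: "alg_closed TYPE('a)" and P: "prime_ideal P" and S: "finite S"
    and v: "v \<in> subalg_gen iota S" "v \<notin> P"
  shows "\<exists>f. hom_mod (subalg_gen iota S) P f \<and> f v \<noteq> 0"
  using S v
proof (induction S arbitrary: v)
  case empty
  then obtain c where "v = iota c"
    by (auto simp: subalg_gen_empty)
  moreover from this have "c \<noteq> 0"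
    using empty.prems(2) ideal_zero[OF prime_ideal_ideal[OF P]] by auto
  ultimately show ?case
    using hom_mod_scalars[OF P] inv_f_f[OF inj_iota] by (auto simp: subalg_gen_empty)
next
  case (insert x S)
  obtain u where u: "u \<in> subalg_gen iota S" "u \<notin> P" and lift:
    "\<And>f. hom_mod (subalg_gen iota S) P f \<Longrightarrow> f u \<noteq> 0 \<Longrightarrow>
       \<exists>g. hom_mod (adjoin (subalg_gen iota S) x) P g \<and> g v \<noteq> 0"
    using extend_hom_adjoin_nonvanishing[OF closed subalgebra_subalg_gen P] insert.prems
    unfolding subalg_gen_insert by metis
  show ?case
    using insert.IH[OF u] lift unfolding subalg_gen_insert by blast
qed

theorem weak_nullstellensatz:
  assumes "alg_closed TYPE('a)" and "finitely_generated iota" and "\<forall>n. h ^ n \<noteq> 0"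
  obtains \<psi> where "k_hom_on UNIV \<psi>" "\<psi> h \<noteq> 0"
proof -
  obtain P where P: "prime_ideal P" "h \<notin> P"
    using exists_prime_ideal_notin assms(3) by blast
  obtain S where "finite S" "subalg_gen iota S = UNIV"
    using assms(2) by (auto simp: finitely_generated_def)
  then show thesis
    using exists_hom_mod_nonvanishing[OF assms(1) P(1), of S h] P(2) that
    by (auto simp: hom_mod_def)
qed

end

section \<open>Orbits of a locally nilpotent derivation\<close>

lemma coeff_Suc_eq_pderiv:
  fixes p :: "'a::field_char_0 poly"
  shows "coeff p (Suc n) = coeff (pderiv p) n / of_nat (Suc n)"
  by (simp add: coeff_pderiv del: of_nat_Suc)

text \<open>\<open>exp_orbit\<close> is the comorphism of the orbit map \<open>t \<mapsto> exp(tD) \<cdot> p\<close> of the \<open>k\<close>-point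
  \<open>p\<close> given by \<open>\<psi>\<close>, for the \<open>G\<^sub>a\<close>-action defined by \<open>D\<close>.\<close>

locale lnd_point = k_algebra iota
  for iota :: "'a::field_char_0 \<Rightarrow> 'b::comm_ring_1" +
  fixes D :: "'b \<Rightarrow> 'b" and \<psi> :: "'b \<Rightarrow> 'a"
  assumes lnd: "D \<in> LND iota" and point: "k_hom_on UNIV \<psi>"
begin

definition exp_orbit :: "'b \<Rightarrow> 'a poly" where
  "exp_orbit b = Abs_poly (\<lambda>n. \<psi> ((D ^^ n) b) / fact n)"

lemma D_add: "D (a + b) = D a + D b"
  using lnd unfolding LND_def k_derivation_def by blast

lemma D_mult: "D (a * b) = a * D b + b * D a"
  using lnd unfolding LND_def k_derivation_def by blast

lemma D_iota: "D (iota c) = 0"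
proof -
  have "D (iota c * 1) = iota c * D 1"
    using lnd unfolding LND_def k_derivation_def by blast
  moreover have "D 1 = 0"
    using D_mult[of 1 1] by simp
  ultimately show ?thesis by simp
qed

lemma funpow_D_add: "(D ^^ n) (a + b) = (D ^^ n) a + (D ^^ n) b"
  by (induction n) (simp_all add: D_add)

lemma funpow_D_zero: "(D ^^ n) 0 = 0"
  using funpow_D_add[of n 0 0] by simp

lemma funpow_D_eventually_zero: "\<exists>m. \<forall>n\<ge>m. (D ^^ n) b = 0"
proof -
  obtain m where m: "(D ^^ m) b = 0"
    using lnd by (auto simp: LND_def)
  have "(D ^^ n) b = 0" if "m \<le> n" for n
    using m funpow_D_zero[of "n - m"] that
    by (metis funpow_add le_add_diff_inverse2 o_apply)
  then show ?thesis by blast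
qed

lemma coeff_exp_orbit: "coeff (exp_orbit b) n = \<psi> ((D ^^ n) b) / fact n"
proof -
  obtain m where "\<forall>n\<ge>m. (D ^^ n) b = 0"
    using funpow_D_eventually_zero by blast
  then show ?thesis
    unfolding exp_orbit_def using k_hom_on_zero[OF point]
    by (subst coeff_Abs_poly[of m]) auto
qed

lemma pderiv_exp_orbit: "pderiv (exp_orbit b) = exp_orbit (D b)"
proof (rule poly_eqI)
  fix n
  have "of_nat (Suc n) / fact (Suc n) = (1 / fact n :: 'a)"
    by (simp add: field_simps del: of_nat_Suc)
  then show "coeff (pderiv (exp_orbit b)) n = coeff (exp_orbit (D b)) n"
    by (simp add: coeff_pderiv coeff_exp_orbit funpow_Suc_right del: funpow.simps of_nat_Suc)
qed

lemma exp_orbit_add: "exp_orbit (a + b) = exp_orbit a + exp_orbit b"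
  by (rule poly_eqI) (simp add: coeff_exp_orbit funpow_D_add k_hom_on_add[OF point] add_divide_distrib)

text \<open>Multiplicativity is propagated from the constant coefficients by \<open>pderiv\<close>, which
  \<open>exp_orbit\<close> intertwines with \<open>D\<close>; this avoids the higher Leibniz rule.\<close>

lemma exp_orbit_mult: "exp_orbit (a * b) = exp_orbit a * exp_orbit b"
proof (rule poly_eqI)
  fix n show "coeff (exp_orbit (a * b)) n = coeff (exp_orbit a * exp_orbit b) n"
  proof (induction n arbitrary: a b)
    case 0
    then show ?case
      by (simp add: coeff_exp_orbit coeff_mult k_hom_on_mult[OF point])
  next
    case (Suc n)
    have "coeff (pderiv (exp_orbit (a * b))) n
        = coeff (exp_orbit (a * D b)) n + coeff (exp_orbit (b * D a)) n"
      by (simp add: pderiv_exp_orbit D_mult exp_orbit_add)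
    also have "\<dots> = coeff (pderiv (exp_orbit a * exp_orbit b)) n"
      by (simp add: Suc.IH pderiv_mult pderiv_exp_orbit)
    finally show ?case
      by (simp add: coeff_Suc_eq_pderiv[of _ n])
  qed
qed

lemma exp_orbit_iota: "exp_orbit (iota c) = [:c:]"
proof (rule poly_eqI)
  fix n show "coeff (exp_orbit (iota c)) n = coeff [:c:] n"
    by (cases n)
      (simp_all add: coeff_exp_orbit k_hom_on_iota[OF point] funpow_Suc_right D_iota funpow_D_zero
        k_hom_on_zero[OF point] del: funpow.simps)
qed

lemma A1_morphism_exp_orbit: "A1_morphism iota exp_orbit"
  using exp_orbit_iota[of 1] by (simp add: A1_morphism_def exp_orbit_add exp_orbit_mult exp_orbit_iota)

lemma coeff_exp_orbit_1: "coeff (exp_orbit b) 1 = \<psi> (D b)"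
  by (simp add: coeff_exp_orbit)

end

theorem proposition6p10:
  fixes iota :: "'a::field_char_0 \<Rightarrow> 'b::comm_ring_1"
  assumes "alg_closed TYPE('a)"
    and "k_algebra_map iota"
    and "finitely_generated iota"
    and "reduced TYPE('b)"
  shows "O_ch iota \<subseteq> makar_limanov iota \<and> (makar_limanov iota = range iota \<longrightarrow> O_ch iota = range iota)"
proof -
  interpret k_algebra iota
    using assms(2) by unfold_locales
  have "D f = 0" if f: "f \<in> O_ch iota" and D: "D \<in> LND iota" for f D
  proof (rule ccontr)
    assume "D f \<noteq> 0"
    with assms(4) have "\<forall>n. D f ^ n \<noteq> 0"
      by (auto simp: reduced_def)
    then obtain \<psi> where \<psi>: "k_hom_on UNIV \<psi>" "\<psi> (D f) \<noteq> 0"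
      using weak_nullstellensatz[OF assms(1,3)] by blast
    interpret lnd_point iota D \<psi>
      using D \<psi>(1) by unfold_locales
    obtain c where "exp_orbit f = [:c:]"
      using f A1_morphism_exp_orbit by (auto simp: O_ch_def O_ch_g_def)
    then show False
      using coeff_exp_orbit_1[of f] \<psi>(2) by simp
  qed
  then have "O_ch iota \<subseteq> makar_limanov iota"
    by (auto simp: makar_limanov_def)
  moreover have "range iota \<subseteq> O_ch iota"
    by (auto simp: O_ch_def O_ch_g_def A1_morphism_def)
  ultimately show ?thesis by blast
qed

end
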